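(* Let $f:M^n\to Q^n$ be a Lagrangian immersion, fix $A\in\mathcal A$ with associated one-form $s$, and let $\{e_1,\dots,e_n\}$ be a local orthonormal frame and $\theta_1,\dots,\theta_n$ local angle functions with $Ae_j=\cos(2\theta_j)e_j-\sin(2\theta_j)Je_j$. Then for all $i,j,k=1,\dots,n$ with $j\neq k$: $$e_i(\theta_j)=h^i_{jj}-\tfrac12 s(e_i),\qquad \sin(\theta_j-\theta_k)\,\omega_j^k(e_i)=\cos(\theta_j-\theta_k)\,h^k_{ij}.$$
   Context: $Q^n=\{[z]:z_0^2+\cdots+z_{n+1}^2=0\}\subset\mathbb{C}P^{n+1}(4)$ (Fubini–Study metric of holomorphic sectional curvature $4$, complex structure $J$), with induced metric $g$ and complex structure $J$. $\mathcal A$ is the set of shape operators of $Q^n$ in $\mathbb{C}P^{n+1}(4)$ associated with (local) unit normal vector fields $\xi$; each is a symmetric involution anticommuting with $J$. For $A\in\mathcal A$ with unit normal $\xi$ there is a one-form $s$ on $Q^n$ with $\nabla^{\mathbb{C}P^{n+1}}_X\xi=-AX+s(X)J\xi$ and $\nabla^{Q^n}_XA=s(X)JA$ for $X$ tangent to $Q^n$. An immersion $f:M^n\to Q^n$ is Lagrangian if $J$ maps tangent spaces of $M$ into normal spaces. Writing $AX=BX-JCX$ with $BX,CX$ tangent, $B$ and $C$ are simultaneously diagonalizable by a local orthonormal frame $\{e_j\}$ with $Be_j=\cos(2\theta_j)e_j$, $Ce_j=\sin(2\theta_j)e_j$; the $\theta_j$ (defined mod $\pi$) are the local angle functions. $h$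 is the second fundamental form of $f$, $h^k_{ij}=g(h(e_i,e_j),Je_k)$ (totally symmetric in $i,j,k$), $\nabla$ is the induced Levi-Civita connection of $M$, and $\omega_j^k(X)=g(\nabla_Xe_j,e_k)$. *)

theory Defs
  imports "HOL-Analysis.Analysis"
begin

text \<open>C^{n+2} is complex^'c with CARD('c) = n + 2; CP^{n+1}(4) is the
  Hopf quotient of the unit sphere S^{2n+3}(1) in C^{n+2}.  A Lagrangian immersion
  f : M^n -> Q^n is described locally (on a chart U, an open subset of real^'m,
  CARD('m) = n) by a horizontal lift F : U -> S^{2n+3} with sum_c F_c^2 = 0.
  Tangent vectors of CP^{n+1} at f(x) are identified with horizontal vectors at F(x)
  (orthogonal to F(x) and i F(x)); the Levi-Civita connection of CP^{n+1} is the
  horizontal part of the flat derivative of C^{n+2}.\<close>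

definition cinner :: "complex^'c \<Rightarrow> complex^'c \<Rightarrow> complex" where
  "cinner v w = (\<Sum>c\<in>UNIV. v$c * cnj (w$c))"

definition cbil :: "complex^'c \<Rightarrow> complex^'c \<Rightarrow> complex" where
  "cbil v w = (\<Sum>c\<in>UNIV. v$c * w$c)"

definition cconj :: "complex^'c \<Rightarrow> complex^'c" where
  "cconj v = (\<chi> c. cnj (v$c))"

definition gR :: "complex^'c \<Rightarrow> complex^'c \<Rightarrow> real" where
  "gR v w = Re (cinner v w)"

definition Jv :: "complex^'c \<Rightarrow> complex^'c" where
  "Jv v = (\<chi> c. \<i> * v$c)"

text \<open>Horizontal lift of the tangent space of Q^n at [z] (z on the unit sphere,
  cbil z z = 0): vectors orthogonal to z, i z and with sum_c z_c v_c = 0.\<close>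
definition QT :: "complex^'c \<Rightarrow> complex^'c \<Rightarrow> bool" where
  "QT z v \<longleftrightarrow> cinner v z = 0 \<and> cbil z v = 0"

text \<open>Orthogonal projection onto QT z (z, conj z are orthonormal when z is on Q).\<close>
definition projQ :: "complex^'c \<Rightarrow> complex^'c \<Rightarrow> complex^'c" where
  "projQ z v = v - cinner v z *s z - cinner v (cconj z) *s cconj z"

text \<open>Shape operator A of Q^n in CP^{n+1} w.r.t. the unit normal xi, applied to the
  tangent vector X of M (pushed forward by F): A X = - (nabla^{CP}_X xi)^{T Q}.
  dxi x X is the flat derivative of xi along X.\<close>
definition shapeA :: "(real^'m \<Rightarrow> complex^'c) \<Rightarrow> (real^'m \<Rightarrow> real^'m \<Rightarrow> complex^'c)
    \<Rightarrow> real^'m \<Rightarrow> real^'m \<Rightarrow> complex^'c" where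
  "shapeA F dxi x X = - projQ (F x) (dxi x X)"

text \<open>The one-form s: nabla^{CP}_X xi = - A X + s(X) J xi, so s(X) = g(nabla_X xi, J xi).\<close>
definition sform :: "(real^'m \<Rightarrow> complex^'c) \<Rightarrow> (real^'m \<Rightarrow> real^'m \<Rightarrow> complex^'c)
    \<Rightarrow> real^'m \<Rightarrow> real^'m \<Rightarrow> real" where
  "sform xi dxi x X = gR (dxi x X) (Jv (xi x))"

text \<open>dE j x w is the flat derivative at x along w of E_j = dF(e_j).
  omega_j^k(e_i) = g(nabla_{e_i} e_j, e_k) (Gauss formula: tangential part of the
  ambient derivative), and h^k_{ij} = g(h(e_i,e_j), J e_k) (J e_k is tangent to Q,
  normal to M, so only the second fundamental form of M in Q contributes).\<close>
definition omega :: "(real^'m \<Rightarrow> real^'m \<Rightarrow> complex^'c) \<Rightarrow> ('m \<Rightarrow> real^'m \<Rightarrow> real^'m)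
    \<Rightarrow> ('m \<Rightarrow> real^'m \<Rightarrow> real^'m \<Rightarrow> complex^'c) \<Rightarrow> 'm \<Rightarrow> 'm \<Rightarrow> 'm \<Rightarrow> real^'m \<Rightarrow> real" where
  "omega dF e dE j k i x = gR (dE j x (e i x)) (dF x (e k x))"

definition hcomp :: "(real^'m \<Rightarrow> real^'m \<Rightarrow> complex^'c) \<Rightarrow> ('m \<Rightarrow> real^'m \<Rightarrow> real^'m)
    \<Rightarrow> ('m \<Rightarrow> real^'m \<Rightarrow> real^'m \<Rightarrow> complex^'c) \<Rightarrow> 'm \<Rightarrow> 'm \<Rightarrow> 'm \<Rightarrow> real^'m \<Rightarrow> real" where
  "hcomp dF e dE k i j x = gR (dE j x (e i x)) (Jv (dF x (e k x)))"

end

theory Submission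
  imports Defs
begin

text \<open>
  On the horizontal lift the unit normal is xi = lambda conj(F) with |lambda| = 1, and the angle
  condition on A says that the frame E_j = dF(e_j), which is Hermitian-orthonormal, has
  complex-bilinear products E_j . E_k = -lambda exp(2 i theta_j) delta_jk.  Differentiating along
  e_i, the diagonal bilinear identity expresses e_i(theta_j) through h^j_ij and s(e_i); for j /= k
  the Hermitian and bilinear identities combine to exp(2 i theta_k) a = exp(2 i theta_j) conj(a)
  for a = <D_(e_i) E_j, E_k>, whose real and imaginary parts are omega_j^k(e_i) and h^k_ij.
  Finally h^j_ij = h^i_jj by the total symmetry of the cubic form, which comes from the symmetry
  of the second derivatives of F together with the Lagrangian condition.
\<close>

lemma cinner_commute: "cinner w v = cnj (cinner v w)"
  by (simp add: cinner_def mult.commute)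

lemma cbil_commute: "cbil v w = cbil w v"
  by (simp add: cbil_def mult.commute)

lemma gR_commute: "gR v w = gR w v"
  by (simp add: gR_def cinner_commute[of v w])

lemma cinner_scale_left: "cinner (a *s v) w = a * cinner v w"
  by (simp add: cinner_def sum_distrib_left mult.assoc)

lemma cinner_scale_right: "cinner v (a *s w) = cnj a * cinner v w"
  by (simp add: cinner_def sum_distrib_left mult.assoc mult.left_commute)

lemma cbil_scale_left: "cbil (a *s v) w = a * cbil v w"
  by (simp add: cbil_def sum_distrib_left mult.assoc)

lemma cinner_add_left: "cinner (v + u) w = cinner v w + cinner u w"
  by (simp add: cinner_def sum.distrib distrib_right)

lemma cinner_diff_left: "cinner (v - u) w = cinner v w - cinner u w"
  by (simp add: cinner_def sum_subtractf left_diff_distrib)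

lemma cinner_add_right: "cinner w (v + u) = cinner w v + cinner w u"
  by (simp add: cinner_def sum.distrib distrib_left)

lemma cinner_diff_right: "cinner w (v - u) = cinner w v - cinner w u"
  by (simp add: cinner_def sum_subtractf right_diff_distrib)

lemma cbil_diff_left: "cbil (v - u) w = cbil v w - cbil u w"
  by (simp add: cbil_def sum_subtractf left_diff_distrib)

lemma cbil_minus_left: "cbil (- v) w = - cbil v w"
  by (simp add: cbil_def sum_negf)

lemma cinner_cconj_left: "cinner (cconj v) w = cnj (cbil v w)"
  by (simp add: cinner_def cbil_def cconj_def)

lemma cinner_cconj_right: "cinner v (cconj w) = cbil v w"
  by (simp add: cinner_def cbil_def cconj_def)

lemma cinner_cconj_cconj: "cinner (cconj v) (cconj w) = cnj (cinner v w)"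
  by (simp add: cinner_def cconj_def)

lemma cbil_cconj_left: "cbil (cconj v) w = cinner w v"
  by (simp add: cinner_def cbil_def cconj_def mult.commute)

lemma Jv_eq_scale: "Jv v = \<i> *s v"
  by (simp add: Jv_def vec_eq_iff)

lemma scaleR_eq_scale: "r *\<^sub>R (v::complex^'c) = complex_of_real r *s v"
  by (simp add: vec_eq_iff) (simp add: scaleR_conv_of_real)

lemma cinner_Jv_left: "cinner (Jv v) w = \<i> * cinner v w"
  by (simp add: Jv_eq_scale cinner_scale_left)

lemma cbil_Jv_right: "cbil w (Jv v) = \<i> * cbil w v"
  by (simp add: Jv_eq_scale cbil_def sum_distrib_left mult.left_commute)

lemma gR_Jv_right: "gR v (Jv w) = Im (cinner v w)"
  by (simp add: gR_def Jv_eq_scale cinner_scale_right)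

lemma gR_Jv_left: "gR (Jv v) w = - Im (cinner v w)"
  by (simp add: gR_def cinner_Jv_left)

lemma cinner_eq_Complex_gR: "cinner v w = Complex (gR v w) (gR v (Jv w))"
  by (simp only: gR_Jv_right) (simp add: gR_def complex_eq_iff)

lemma cinner_self_eq_0: "cinner v v = 0 \<Longrightarrow> v = 0"
proof -
  assume "cinner v v = 0"
  moreover have "cinner v v = (\<Sum>c\<in>UNIV. of_real ((cmod (v$c))\<^sup>2))"
    unfolding cinner_def
    by (rule sum.cong) (simp_all add: complex_norm_square[symmetric] del: of_real_power)
  ultimately have "(\<Sum>c\<in>UNIV. (cmod (v$c))\<^sup>2) = 0"
    by (metis of_real_eq_0_iff of_real_sum)
  then show "v = 0" by (simp add: vec_eq_iff sum_nonneg_eq_0_iff)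
qed

lemma gR_add_left: "gR (v + u) w = gR v w + gR u w"
  by (simp add: gR_def cinner_add_left)

lemma linear_gR_left: "linear (\<lambda>v. gR v w)"
  by (rule linearI) (simp_all add: gR_def cinner_add_left scaleR_eq_scale cinner_scale_left)

lemma rotation_eq_cis_scale: "cos t *\<^sub>R v - sin t *\<^sub>R Jv v = cis (- t) *s v"
  by (simp add: vec_eq_iff scaleR_eq_scale Jv_eq_scale complex_eq_iff)

lemma sin_Re_eq_cos_Im_if_cis_eq_cnj:
  assumes "cis (2 * \<beta>) * a = cis (2 * \<alpha>) * cnj a"
  shows "sin (\<alpha> - \<beta>) * Re a = cos (\<alpha> - \<beta>) * Im a"
proof -
  have "cis (\<beta> - \<alpha>) * a = cis (- (\<alpha> + \<beta>)) * (cis (2 * \<beta>) * a)"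
    by (simp add: mult.assoc[symmetric] cis_mult)
  also have "\<dots> = cis (\<alpha> - \<beta>) * cnj a"
    by (simp add: assms mult.assoc[symmetric] cis_mult)
  finally have "Im (cis (\<beta> - \<alpha>) * a) = Im (cis (\<alpha> - \<beta>) * cnj a)" by simp
  then show ?thesis by (simp add: sin_diff cos_diff algebra_simps)
qed

lemma cconj_eq_if_cbil_unit:
  assumes "cinner v v = 1" "cbil v v * cnj (cbil v v) = 1"
  shows "cconj v = cnj (cbil v v) *s v"
proof -
  define w where "w = cconj v - cnj (cbil v v) *s v"
  have "cinner w w = 0"
    using assms unfolding w_def
    by (simp only: cinner_diff_left cinner_diff_right)
      (simp add: cinner_diff_left cinner_diff_right cinner_scale_left cinner_scale_right
        cinner_cconj_left cinner_cconj_right cinner_cconj_cconj cbil_scale_left cbil_cconj_left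
        mult.commute)
  then have "w = 0" by (rule cinner_self_eq_0)
  then show ?thesis unfolding w_def by simp
qed

lemma normal_eq_cbil_scale_cconj:
  assumes z: "cinner z z = 1" "cbil z z = 0"
    and n: "cinner n z = 0" "\<And>v. QT z v \<Longrightarrow> gR n v = 0"
  shows "n = cbil n z *s cconj z"
proof -
  define v where "v = n - cbil n z *s cconj z"
  have "cinner v z = 0" "cbil v z = 0"
    using z n(1) unfolding v_def
    by (simp_all add: cinner_diff_left cinner_scale_left cinner_cconj_left
        cbil_diff_left cbil_scale_left cbil_cconj_left)
  then have v_z: "cinner v z = 0" "cbil z v = 0" by (simp_all add: cbil_commute)
  then have "QT z v" "QT z (Jv v)"
    by (simp_all add: QT_def cinner_Jv_left cbil_Jv_right)
  then have "cinner n v = 0"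
    using n(2) by (simp add: cinner_eq_Complex_gR complex_eq_iff)
  then have "cinner v v = 0"
    using v_z(2) unfolding v_def
    by (simp add: cinner_diff_left cinner_scale_left cinner_cconj_left)
  then have "v = 0" by (rule cinner_self_eq_0)
  then show ?thesis unfolding v_def by simp
qed

lemma has_derivative_cinner:
  assumes "(f has_derivative f') (at x)" "(g has_derivative g') (at x)"
  shows "((\<lambda>y. cinner (f y) (g y)) has_derivative
           (\<lambda>w. cinner (f' w) (g x) + cinner (f x) (g' w))) (at x)"
proof -
  have "\<And>c. ((\<lambda>y. f y $ c) has_derivative (\<lambda>w. f' w $ c)) (at x)"
       "\<And>c. ((\<lambda>y. cnj (g y $ c)) has_derivative (\<lambda>w. cnj (g' w $ c))) (at x)"
    using assms by (auto intro: bounded_linear.has_derivative[OF bounded_linear_cnj]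
        bounded_linear.has_derivative[OF bounded_linear_vec_nth])
  then have "((\<lambda>y. \<Sum>c\<in>UNIV. f y $ c * cnj (g y $ c)) has_derivative
        (\<lambda>w. \<Sum>c\<in>UNIV. f x $ c * cnj (g' w $ c) + f' w $ c * cnj (g x $ c))) (at x)"
    by (intro has_derivative_sum has_derivative_mult)
  then show ?thesis by (simp add: cinner_def sum.distrib add.commute)
qed

lemma has_derivative_cbil:
  assumes "(f has_derivative f') (at x)" "(g has_derivative g') (at x)"
  shows "((\<lambda>y. cbil (f y) (g y)) has_derivative
           (\<lambda>w. cbil (f' w) (g x) + cbil (f x) (g' w))) (at x)"
proof -
  have "\<And>c. ((\<lambda>y. f y $ c) has_derivative (\<lambda>w. f' w $ c)) (at x)"
       "\<And>c. ((\<lambda>y. g y $ c) has_derivative (\<lambda>w. g' w $ c)) (at x)"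
    using assms by (auto intro: bounded_linear.has_derivative[OF bounded_linear_vec_nth])
  then have "((\<lambda>y. \<Sum>c\<in>UNIV. f y $ c * g y $ c) has_derivative
        (\<lambda>w. \<Sum>c\<in>UNIV. f x $ c * g' w $ c + f' w $ c * g x $ c)) (at x)"
    by (intro has_derivative_sum has_derivative_mult)
  then show ?thesis by (simp add: cbil_def sum.distrib add.commute)
qed

lemma has_derivative_unique_on_open:
  assumes "open U" "x \<in> U" "\<And>y. y \<in> U \<Longrightarrow> f y = g y"
    and "(f has_derivative f') (at x)" "(g has_derivative g') (at x)"
  shows "f' = g'"
proof -
  have "(g has_derivative f') (at x)"
    using has_derivative_transform_within_open[OF assms(4) assms(1,2)] assms(3) by blast
  then show ?thesis using has_derivative_unique assms(5) by blast
qed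

lemma has_derivative_const_on_open:
  assumes "open U" "x \<in> U" "\<And>y. y \<in> U \<Longrightarrow> f y = c" "(f has_derivative f') (at x)"
  shows "f' w = 0"
  using has_derivative_unique_on_open[OF assms has_derivative_const] by simp

lemma second_difference_mvt:
  fixes \<phi> :: "'a::real_normed_vector \<Rightarrow> real"
  assumes deriv: "\<And>y. y \<in> U \<Longrightarrow> (\<phi> has_derivative \<phi>' y) (at y)"
    and t: "0 < t"
    and segments: "\<And>s. 0 \<le> s \<Longrightarrow> s \<le> t \<Longrightarrow> x + s *\<^sub>R u \<in> U \<and> x + s *\<^sub>R u + t *\<^sub>R w \<in> U"
  shows "\<exists>\<sigma>\<in>{0<..<t}. \<phi> (x + t *\<^sub>R u + t *\<^sub>R w) - \<phi> (x + t *\<^sub>R u) - \<phi> (x + t *\<^sub>R w) + \<phi> x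
           = t * (\<phi>' (x + \<sigma> *\<^sub>R u + t *\<^sub>R w) u - \<phi>' (x + \<sigma> *\<^sub>R u) u)"
proof -
  define g where "g s = \<phi> (x + s *\<^sub>R u + t *\<^sub>R w) - \<phi> (x + s *\<^sub>R u)" for s
  define g' where "g' s h = \<phi>' (x + s *\<^sub>R u + t *\<^sub>R w) (h *\<^sub>R u) - \<phi>' (x + s *\<^sub>R u) (h *\<^sub>R u)" for s h
  have "(g has_derivative g' s) (at s within {0..t})" if "0 \<le> s" "s \<le> t" for s
  proof -
    have "((\<lambda>s. \<phi> (x + s *\<^sub>R u + t *\<^sub>R w)) has_derivative
           (\<lambda>h. \<phi>' (x + s *\<^sub>R u + t *\<^sub>R w) (h *\<^sub>R u))) (at s within {0..t})"
      by (rule has_derivative_compose[OF _ deriv]) (use segments that in \<open>auto intro!: derivative_eq_intros\<close>)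
    moreover have "((\<lambda>s. \<phi> (x + s *\<^sub>R u)) has_derivative
           (\<lambda>h. \<phi>' (x + s *\<^sub>R u) (h *\<^sub>R u))) (at s within {0..t})"
      by (rule has_derivative_compose[OF _ deriv]) (use segments that in \<open>auto intro!: derivative_eq_intros\<close>)
    ultimately show ?thesis unfolding g_def g'_def by (rule has_derivative_diff)
  qed
  then obtain \<sigma> where \<sigma>: "\<sigma> \<in> {0<..<t}" "g t - g 0 = g' \<sigma> t"
    using mvt_simple[of 0 t g g'] t by auto
  have "0 \<le> \<sigma>" "\<sigma> \<le> t" using \<sigma>(1) by auto
  then have "linear (\<phi>' (x + \<sigma> *\<^sub>R u))" "linear (\<phi>' (x + \<sigma> *\<^sub>R u + t *\<^sub>R w))"
    using segments deriv has_derivative_linear by blast+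
  then have "g' \<sigma> t = t * (\<phi>' (x + \<sigma> *\<^sub>R u + t *\<^sub>R w) u - \<phi>' (x + \<sigma> *\<^sub>R u) u)"
    unfolding g'_def by (simp add: linear_cmul right_diff_distrib)
  then show ?thesis using \<sigma> unfolding g_def by (auto simp: algebra_simps)
qed

lemma second_difference_estimate:
  fixes \<phi> :: "'a::real_normed_vector \<Rightarrow> real"
  assumes deriv: "\<And>y. y \<in> U \<Longrightarrow> (\<phi> has_derivative \<phi>' y) (at y)"
    and t: "0 < t" and linB: "linear (\<lambda>v. B v u)"
    and close: "\<And>y. norm (y - x) \<le> t * (norm u + norm w) \<Longrightarrow>
      y \<in> U \<and> \<bar>\<phi>' y u - \<phi>' x u - B (y - x) u\<bar> \<le> \<eta> * norm (y - x)"
    and \<eta>: "0 \<le> \<eta>"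
  shows "\<bar>\<phi> (x + t *\<^sub>R u + t *\<^sub>R w) - \<phi> (x + t *\<^sub>R u) - \<phi> (x + t *\<^sub>R w) + \<phi> x - t\<^sup>2 * B w u\<bar>
    \<le> 2 * \<eta> * t\<^sup>2 * (norm u + norm w)"
proof -
  define N where "N = norm u + norm w"
  have near: "norm ((x + s *\<^sub>R u + c *\<^sub>R w) - x) \<le> t * N"
    if "0 \<le> s" "s \<le> t" "0 \<le> c" "c \<le> t" for s c
  proof -
    have "norm ((x + s *\<^sub>R u + c *\<^sub>R w) - x) \<le> s * norm u + c * norm w"
      using norm_triangle_ineq[of "s *\<^sub>R u" "c *\<^sub>R w"] that by simp
    also have "\<dots> \<le> t * N"
      unfolding N_def using that by (simp add: distrib_left add_mono mult_right_mono)
    finally show ?thesis .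
  qed
  have segments: "x + s *\<^sub>R u \<in> U \<and> x + s *\<^sub>R u + t *\<^sub>R w \<in> U" if "0 \<le> s" "s \<le> t" for s
    using close[unfolded N_def[symmetric]] near[OF that, of 0] near[OF that, of t] t by simp
  obtain \<sigma> where \<sigma>: "\<sigma> \<in> {0<..<t}" and \<Delta>:
    "\<phi> (x + t *\<^sub>R u + t *\<^sub>R w) - \<phi> (x + t *\<^sub>R u) - \<phi> (x + t *\<^sub>R w) + \<phi> x
       = t * (\<phi>' (x + \<sigma> *\<^sub>R u + t *\<^sub>R w) u - \<phi>' (x + \<sigma> *\<^sub>R u) u)"
    using second_difference_mvt[OF deriv t segments] by blast
  define z\<^sub>1 where "z\<^sub>1 = x + \<sigma> *\<^sub>R u + t *\<^sub>R w"
  define z\<^sub>2 where "z\<^sub>2 = x + \<sigma> *\<^sub>R u"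
  have "norm (z\<^sub>1 - x) \<le> t * N" "norm (z\<^sub>2 - x) \<le> t * N"
    using near[of \<sigma> t] near[of \<sigma> 0] \<sigma> t by (simp_all add: z\<^sub>1_def z\<^sub>2_def)
  then have "\<bar>\<phi>' z\<^sub>1 u - \<phi>' x u - B (z\<^sub>1 - x) u\<bar> \<le> \<eta> * (t * N)"
    "\<bar>\<phi>' z\<^sub>2 u - \<phi>' x u - B (z\<^sub>2 - x) u\<bar> \<le> \<eta> * (t * N)"
    using close[unfolded N_def[symmetric]] \<eta> by (meson mult_left_mono order_trans)+
  moreover have "B (z\<^sub>1 - x) u - B (z\<^sub>2 - x) u = t * B w u"
    using linear_diff[OF linB, of "z\<^sub>1 - x" "z\<^sub>2 - x"] linear_cmul[OF linB, of t w]
    by (simp add: z\<^sub>1_def z\<^sub>2_def)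
  ultimately have "\<bar>\<phi>' z\<^sub>1 u - \<phi>' z\<^sub>2 u - t * B w u\<bar> \<le> 2 * \<eta> * t * N"
    by (simp add: abs_le_iff algebra_simps)
  moreover have "\<phi> (x + t *\<^sub>R u + t *\<^sub>R w) - \<phi> (x + t *\<^sub>R u) - \<phi> (x + t *\<^sub>R w) + \<phi> x - t\<^sup>2 * B w u
      = t * (\<phi>' z\<^sub>1 u - \<phi>' z\<^sub>2 u - t * B w u)"
    unfolding \<Delta> z\<^sub>1_def z\<^sub>2_def by (simp add: power2_eq_square algebra_simps)
  ultimately show ?thesis
    using t mult_left_mono[of _ "2 * \<eta> * t * N" t] unfolding N_def
    by (simp add: abs_mult power2_eq_square mult_ac)
qed

lemma second_difference_tendsto:
  fixes \<phi> :: "'a::real_normed_vector \<Rightarrow> real"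
  assumes U: "open U" "x \<in> U"
    and deriv: "\<And>y. y \<in> U \<Longrightarrow> (\<phi> has_derivative \<phi>' y) (at y)"
    and deriv2: "((\<lambda>y. \<phi>' y u) has_derivative (\<lambda>v. B v u)) (at x)"
  shows "((\<lambda>t. (\<phi> (x + t *\<^sub>R u + t *\<^sub>R w) - \<phi> (x + t *\<^sub>R u) - \<phi> (x + t *\<^sub>R w) + \<phi> x) / t\<^sup>2)
           \<longlongrightarrow> B w u) (at_right 0)"
proof -
  define \<Delta> where "\<Delta> t = \<phi> (x + t *\<^sub>R u + t *\<^sub>R w) - \<phi> (x + t *\<^sub>R u) - \<phi> (x + t *\<^sub>R w) + \<phi> x" for t
  have "((\<lambda>t. \<Delta> t / t\<^sup>2) \<longlongrightarrow> B w u) (at_right 0)"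
  proof (rule tendstoI)
    fix \<epsilon> :: real assume "\<epsilon> > 0"
    define N where "N = norm u + norm w"
    define \<eta> where "\<eta> = \<epsilon> / (2 * (N + 1))"
    have N: "N \<ge> 0" by (simp add: N_def)
    have \<eta>: "\<eta> > 0" "2 * \<eta> * N < \<epsilon>"
      using \<open>\<epsilon> > 0\<close> N by (auto simp: \<eta>_def field_simps)
    obtain r where r: "r > 0" "ball x r \<subseteq> U" using U open_contains_ball by blast
    obtain d where d: "d > 0"
      and approx: "\<And>y. norm (y - x) < d \<Longrightarrow> \<bar>\<phi>' y u - \<phi>' x u - B (y - x) u\<bar> \<le> \<eta> * norm (y - x)"
      using deriv2[unfolded has_derivative_at_alt] \<eta>(1) by (metis real_norm_def)
    have linB: "linear (\<lambda>v. B v u)" using deriv2 has_derivative_linear by blast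
    show "\<forall>\<^sub>F t in at_right 0. dist (\<Delta> t / t\<^sup>2) (B w u) < \<epsilon>"
      unfolding eventually_at_right_field
    proof (intro exI conjI allI impI)
      show "min r d / (N + 1) > 0" using r d N by simp
      fix t :: real assume t: "0 < t" "t < min r d / (N + 1)"
      then have "t * (N + 1) < min r d" using N by (simp add: pos_less_divide_eq)
      then have tN: "t * N < r" "t * N < d" using t(1) by (simp_all add: algebra_simps)
      have "y \<in> U \<and> \<bar>\<phi>' y u - \<phi>' x u - B (y - x) u\<bar> \<le> \<eta> * norm (y - x)"
        if "norm (y - x) \<le> t * N" for y
        using that tN r(2) approx[of y] by (auto simp: dist_norm norm_minus_commute)
      then have "\<bar>\<Delta> t - t\<^sup>2 * B w u\<bar> \<le> 2 * \<eta> * t\<^sup>2 * N"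
        unfolding N_def \<Delta>_def
        by (intro second_difference_estimate[where B = B and u = u and x = x, OF deriv t(1) linB])
          (use \<eta>(1) in auto)
      also have "\<dots> < \<epsilon> * t\<^sup>2"
        using \<eta>(2) t(1) by (simp add: mult.commute mult.left_commute)
      finally have "\<bar>\<Delta> t - t\<^sup>2 * B w u\<bar> / t\<^sup>2 < \<epsilon>"
        using t(1) by (simp add: pos_divide_less_eq)
      moreover have "\<Delta> t / t\<^sup>2 - B w u = (\<Delta> t - t\<^sup>2 * B w u) / t\<^sup>2"
        using t(1) by (simp add: field_simps)
      ultimately show "dist (\<Delta> t / t\<^sup>2) (B w u) < \<epsilon>"
        by (simp add: dist_real_def)
    qed
  qed
  then show ?thesis by (simp add: \<Delta>_def)
qed

lemma second_derivative_symmetric: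
  fixes \<phi> :: "'a::real_normed_vector \<Rightarrow> real"
  assumes "open U" "x \<in> U"
    and "\<And>y. y \<in> U \<Longrightarrow> (\<phi> has_derivative \<phi>' y) (at y)"
    and "\<And>v. ((\<lambda>y. \<phi>' y v) has_derivative (\<lambda>w. B w v)) (at x)"
  shows "B w u = B u w"
proof -
  have "((\<lambda>t. (\<phi> (x + t *\<^sub>R w + t *\<^sub>R u) - \<phi> (x + t *\<^sub>R w) - \<phi> (x + t *\<^sub>R u) + \<phi> x) / t\<^sup>2)
           \<longlongrightarrow> B u w) (at_right 0)"
    by (rule second_difference_tendsto[OF assms(1-3) assms(4)])
  moreover have "x + t *\<^sub>R w + t *\<^sub>R u = x + t *\<^sub>R u + t *\<^sub>R w" for t
    by (simp add: algebra_simps)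
  ultimately have "((\<lambda>t. (\<phi> (x + t *\<^sub>R u + t *\<^sub>R w) - \<phi> (x + t *\<^sub>R u) - \<phi> (x + t *\<^sub>R w) + \<phi> x) / t\<^sup>2)
           \<longlongrightarrow> B u w) (at_right 0)"
    by (simp add: algebra_simps)
  moreover have "((\<lambda>t. (\<phi> (x + t *\<^sub>R u + t *\<^sub>R w) - \<phi> (x + t *\<^sub>R u) - \<phi> (x + t *\<^sub>R w) + \<phi> x) / t\<^sup>2)
           \<longlongrightarrow> B w u) (at_right 0)"
    by (rule second_difference_tendsto[OF assms(1-3) assms(4)])
  ultimately show ?thesis
    using tendsto_unique trivial_limit_at_right_real by blast
qed

lemma linear_derivative_of_linear_family:
  assumes "open U" "x \<in> U" "\<And>y. y \<in> U \<Longrightarrow> linear (L y)"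
    and deriv: "\<And>v. ((\<lambda>y. L y v) has_derivative (\<lambda>w. L' w v)) (at x)"
  shows "linear (L' w)"
proof (rule linearI)
  fix a b
  have "(\<lambda>w. L' w (a + b)) = (\<lambda>w. L' w a + L' w b)"
    by (rule has_derivative_unique_on_open[OF assms(1,2) _ deriv has_derivative_add[OF deriv deriv]])
      (simp add: linear_add assms(3))
  then show "L' w (a + b) = L' w a + L' w b" by meson
next
  fix r a
  have "(\<lambda>w. L' w (r *\<^sub>R a)) = (\<lambda>w. r *\<^sub>R L' w a)"
    by (rule has_derivative_unique_on_open[OF assms(1,2) _ deriv has_derivative_scaleR_right[OF deriv]])
      (simp add: linear_cmul assms(3))
  then show "L' w (r *\<^sub>R a) = r *\<^sub>R L' w a" by meson
qed

lemma has_derivative_linear_family_apply: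
  fixes L :: "'a::real_normed_vector \<Rightarrow> 'b::euclidean_space \<Rightarrow> 'c::real_normed_vector"
  assumes U: "open U" "x \<in> U" and lin: "\<And>y. y \<in> U \<Longrightarrow> linear (L y)"
    and deriv: "\<And>v. ((\<lambda>y. L y v) has_derivative (\<lambda>w. L' w v)) (at x)"
    and v: "(v has_derivative v') (at x)"
  shows "((\<lambda>y. L y (v y)) has_derivative (\<lambda>w. L x (v' w) + L' w (v x))) (at x)"
proof -
  have expand: "M z = (\<Sum>b\<in>Basis. (z \<bullet> b) *\<^sub>R M b)" if "linear M" for M :: "'b \<Rightarrow> 'c" and z
  proof -
    have "M z = M (\<Sum>b\<in>Basis. (z \<bullet> b) *\<^sub>R b)" by (simp only: euclidean_representation)
    also have "\<dots> = (\<Sum>b\<in>Basis. (z \<bullet> b) *\<^sub>R M b)"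
      by (simp only: real_vector.linear_sum[OF that] linear_cmul[OF that])
    finally show ?thesis .
  qed
  have lin': "linear (L' w)" for w
    by (rule linear_derivative_of_linear_family[OF U lin deriv])
  have "((\<lambda>y. \<Sum>b\<in>Basis. (v y \<bullet> b) *\<^sub>R L y b) has_derivative
         (\<lambda>w. \<Sum>b\<in>Basis. (v x \<bullet> b) *\<^sub>R L' w b + (v' w \<bullet> b) *\<^sub>R L x b)) (at x)"
    by (intro has_derivative_sum has_derivative_scaleR has_derivative_inner_left deriv v)
  moreover have "(\<Sum>b\<in>Basis. (v x \<bullet> b) *\<^sub>R L' w b + (v' w \<bullet> b) *\<^sub>R L x b) = L x (v' w) + L' w (v x)"
    for w
    using expand[OF lin'[of w], of "v x"] expand[OF lin[OF U(2)], of "v' w"]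
    by (simp add: sum.distrib add.commute)
  ultimately have "((\<lambda>y. \<Sum>b\<in>Basis. (v y \<bullet> b) *\<^sub>R L y b) has_derivative
         (\<lambda>w. L x (v' w) + L' w (v x))) (at x)"
    by simp
  then show ?thesis
    by (rule has_derivative_transform_within_open[OF _ U]) (rule expand[OF lin, symmetric])
qed

locale lagrangian_lift =
  fixes U :: "(real^'m) set"
    and F :: "real^'m \<Rightarrow> complex^'c"
    and dF :: "real^'m \<Rightarrow> real^'m \<Rightarrow> complex^'c"
    and d2F :: "real^'m \<Rightarrow> real^'m \<Rightarrow> real^'m \<Rightarrow> complex^'c"
  assumes open_U: "open U"
    and F_deriv: "x \<in> U \<Longrightarrow> (F has_derivative dF x) (at x)"
    and dF_deriv: "x \<in> U \<Longrightarrow> ((\<lambda>y. dF y v) has_derivative (\<lambda>w. d2F x w v)) (at x)"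
    and F_unit: "x \<in> U \<Longrightarrow> cinner (F x) (F x) = 1"
    and F_null: "x \<in> U \<Longrightarrow> cbil (F x) (F x) = 0"
    and F_horizontal: "x \<in> U \<Longrightarrow> cinner (dF x v) (F x) = 0"
    and F_lagrangian: "x \<in> U \<Longrightarrow> gR (Jv (dF x v)) (dF x w) = 0"
begin

lemma linear_dF: "x \<in> U \<Longrightarrow> linear (dF x)"
  using F_deriv has_derivative_linear by blast

lemma has_derivative_dF_apply:
  "x \<in> U \<Longrightarrow> (v has_derivative v') (at x) \<Longrightarrow>
    ((\<lambda>y. dF y (v y)) has_derivative (\<lambda>w. dF x (v' w) + d2F x w (v x))) (at x)"
  by (rule has_derivative_linear_family_apply[OF open_U _ linear_dF dF_deriv])

lemma cbil_F_dF: "x \<in> U \<Longrightarrow> cbil (F x) (dF x w) = 0"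
proof -
  assume x: "x \<in> U"
  have "((\<lambda>y. cbil (F y) (F y)) has_derivative (\<lambda>w. cbil (dF x w) (F x) + cbil (F x) (dF x w))) (at x)"
    by (rule has_derivative_cbil[OF F_deriv[OF x] F_deriv[OF x]])
  from has_derivative_const_on_open[OF open_U x F_null this]
  have "cbil (dF x w) (F x) + cbil (F x) (dF x w) = 0" by simp
  then show ?thesis by (simp add: cbil_commute[of "dF x w"])
qed

lemma cinner_d2F_F: "x \<in> U \<Longrightarrow> cinner (d2F x w v) (F x) = - cinner (dF x v) (dF x w)"
proof -
  assume x: "x \<in> U"
  have "((\<lambda>y. cinner (dF y v) (F y)) has_derivative
         (\<lambda>w. cinner (d2F x w v) (F x) + cinner (dF x v) (dF x w))) (at x)"
    by (rule has_derivative_cinner[OF dF_deriv[OF x] F_deriv[OF x]])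
  from has_derivative_const_on_open[OF open_U x F_horizontal this]
  have "cinner (d2F x w v) (F x) + cinner (dF x v) (dF x w) = 0" by simp
  then show ?thesis by (simp add: eq_neg_iff_add_eq_0)
qed

definition cubic_form :: "real^'m \<Rightarrow> real^'m \<Rightarrow> real^'m \<Rightarrow> real^'m \<Rightarrow> real" where
  "cubic_form x u v w = gR (d2F x u v) (Jv (dF x w))"

lemma cubic_form_swap12: "x \<in> U \<Longrightarrow> cubic_form x u v w = cubic_form x v u w"
proof -
  assume x: "x \<in> U"
  define c where "c = Jv (dF x w)"
  have "bounded_linear (\<lambda>z. gR z c)"
    using linear_gR_left linear_conv_bounded_linear by blast
  then have "\<And>y. y \<in> U \<Longrightarrow> ((\<lambda>y. gR (F y) c) has_derivative (\<lambda>v. gR (dF y v) c)) (at y)"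
    and "\<And>v. ((\<lambda>y. gR (dF y v) c) has_derivative (\<lambda>u. gR (d2F x u v) c)) (at x)"
    using F_deriv dF_deriv[OF x] bounded_linear.has_derivative by blast+
  then show ?thesis
    unfolding cubic_form_def c_def[symmetric] by (rule second_derivative_symmetric[OF open_U x])
qed

lemma cubic_form_swap23: "x \<in> U \<Longrightarrow> cubic_form x u v w = cubic_form x u w v"
proof -
  assume x: "x \<in> U"
  have "((\<lambda>y. Im (cinner (dF y v) (dF y w))) has_derivative
         (\<lambda>u. Im (cinner (d2F x u v) (dF x w) + cinner (dF x v) (d2F x u w)))) (at x)"
    by (intro bounded_linear.has_derivative[OF bounded_linear_Im] has_derivative_cinner dF_deriv x)
  moreover have "Im (cinner (dF y v) (dF y w)) = 0" if "y \<in> U" for y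
    using F_lagrangian[OF that] by (simp add: gR_Jv_left)
  ultimately have "Im (cinner (d2F x u v) (dF x w) + cinner (dF x v) (d2F x u w)) = 0"
    by (intro has_derivative_const_on_open[OF open_U x, where c = 0])
  then show ?thesis
    unfolding cubic_form_def by (simp add: gR_Jv_right cinner_commute[of "dF x v"])
qed

end

locale lagrangian_unit_normal = lagrangian_lift U F dF d2F
    for U :: "(real^'m) set" and F :: "real^'m \<Rightarrow> complex^'c" and dF d2F +
  fixes \<xi> :: "real^'m \<Rightarrow> complex^'c" and d\<xi> :: "real^'m \<Rightarrow> real^'m \<Rightarrow> complex^'c"
  assumes xi_deriv: "x \<in> U \<Longrightarrow> (\<xi> has_derivative d\<xi> x) (at x)"
    and xi_unit: "x \<in> U \<Longrightarrow> cinner (\<xi> x) (\<xi> x) = 1"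
    and xi_orth: "x \<in> U \<Longrightarrow> cinner (\<xi> x) (F x) = 0"
    and xi_normal: "x \<in> U \<Longrightarrow> QT (F x) v \<Longrightarrow> gR (\<xi> x) v = 0"
begin

definition phase :: "real^'m \<Rightarrow> complex" where
  "phase x = cbil (\<xi> x) (F x)"

lemma xi_eq: "x \<in> U \<Longrightarrow> \<xi> x = phase x *s cconj (F x)"
  unfolding phase_def by (rule normal_eq_cbil_scale_cconj[OF F_unit F_null xi_orth xi_normal])

lemma phase_unit: "x \<in> U \<Longrightarrow> phase x * cnj (phase x) = 1"
  using xi_unit[of x] F_unit[of x]
  by (simp add: xi_eq cinner_scale_left cinner_scale_right cinner_cconj_cconj mult.commute)

lemma cbil_xi_dF: "x \<in> U \<Longrightarrow> cbil (\<xi> x) (dF x w) = 0"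
  by (simp add: xi_eq cbil_scale_left cbil_cconj_left F_horizontal)

lemma cbil_shapeA_dF:
  assumes x: "x \<in> U"
  shows "cbil (shapeA F d\<xi> x u) (dF x w) = - phase x * cinner (dF x w) (dF x u)"
proof -
  have "((\<lambda>y. cbil (\<xi> y) (dF y w)) has_derivative
         (\<lambda>u. cbil (d\<xi> x u) (dF x w) + cbil (\<xi> x) (d2F x u w))) (at x)"
    by (rule has_derivative_cbil[OF xi_deriv[OF x] dF_deriv[OF x]])
  from has_derivative_const_on_open[OF open_U x cbil_xi_dF this]
  have "cbil (d\<xi> x u) (dF x w) = - cbil (\<xi> x) (d2F x u w)"
    by (simp add: eq_neg_iff_add_eq_0)
  also have "\<dots> = phase x * cinner (dF x w) (dF x u)"
    using x by (simp add: xi_eq cbil_scale_left cbil_cconj_left cinner_d2F_F)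
  finally show ?thesis
    using x by (simp add: shapeA_def projQ_def cbil_minus_left cbil_diff_left cbil_scale_left
        cbil_cconj_left cbil_F_dF F_horizontal)
qed

lemma has_derivative_phase:
  "x \<in> U \<Longrightarrow> (phase has_derivative (\<lambda>u. cbil (d\<xi> x u) (F x))) (at x)"
  using has_derivative_cbil[OF xi_deriv F_deriv, of x] unfolding phase_def
  by (simp add: cbil_xi_dF)

lemma sform_eq: "x \<in> U \<Longrightarrow> sform \<xi> d\<xi> x u = Im (cnj (phase x) * cbil (d\<xi> x u) (F x))"
  by (simp add: sform_def gR_Jv_right xi_eq cinner_scale_right cinner_cconj_right)

end

locale lagrangian_angle_frame = lagrangian_unit_normal U F dF d2F \<xi> d\<xi>
    for U :: "(real^'m) set" and F :: "real^'m \<Rightarrow> complex^'c" and dF d2F \<xi> d\<xi> +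
  fixes e :: "'m \<Rightarrow> real^'m \<Rightarrow> real^'m" and de :: "'m \<Rightarrow> real^'m \<Rightarrow> real^'m \<Rightarrow> real^'m"
    and dE :: "'m \<Rightarrow> real^'m \<Rightarrow> real^'m \<Rightarrow> complex^'c"
    and \<theta> :: "'m \<Rightarrow> real^'m \<Rightarrow> real" and d\<theta> :: "'m \<Rightarrow> real^'m \<Rightarrow> real^'m \<Rightarrow> real"
  assumes e_deriv: "x \<in> U \<Longrightarrow> (e j has_derivative de j x) (at x)"
    and E_deriv: "x \<in> U \<Longrightarrow> ((\<lambda>y. dF y (e j y)) has_derivative dE j x) (at x)"
    and frame: "x \<in> U \<Longrightarrow> gR (dF x (e j x)) (dF x (e k x)) = (if j = k then 1 else 0)"
    and theta_deriv: "x \<in> U \<Longrightarrow> (\<theta> j has_derivative d\<theta> j x) (at x)"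
    and angles: "x \<in> U \<Longrightarrow> shapeA F d\<xi> x (e j x) =
        cos (2 * \<theta> j x) *\<^sub>R dF x (e j x) - sin (2 * \<theta> j x) *\<^sub>R Jv (dF x (e j x))"
begin

abbreviation E :: "'m \<Rightarrow> real^'m \<Rightarrow> complex^'c" where
  "E j y \<equiv> dF y (e j y)"

lemma cinner_E: "x \<in> U \<Longrightarrow> cinner (E j x) (E k x) = (if j = k then 1 else 0)"
  using frame[of x j k] F_lagrangian[of x "e k x" "e j x"]
  by (simp add: cinner_eq_Complex_gR gR_commute complex_eq_iff)

lemma cbil_E: "x \<in> U \<Longrightarrow> cbil (E j x) (E k x) = (if j = k then - (phase x * cis (2 * \<theta> j x)) else 0)"
proof -
  assume x: "x \<in> U"
  have "cis (- (2 * \<theta> j x)) * cbil (E j x) (E k x) = cbil (shapeA F d\<xi> x (e j x)) (E k x)"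
    by (simp only: angles[OF x] rotation_eq_cis_scale cbil_scale_left)
  also have "\<dots> = - phase x * (if j = k then 1 else 0)"
    using cinner_E[OF x, of k j] by (simp add: cbil_shapeA_dF[OF x] eq_commute)
  finally have rotated: "cis (- (2 * \<theta> j x)) * cbil (E j x) (E k x) = - phase x * (if j = k then 1 else 0)" .
  have "cbil (E j x) (E k x) = cis (2 * \<theta> j x) * (cis (- (2 * \<theta> j x)) * cbil (E j x) (E k x))"
    by (simp add: mult.assoc[symmetric] cis_mult)
  also have "\<dots> = cis (2 * \<theta> j x) * (- phase x * (if j = k then 1 else 0))"
    by (simp only: rotated)
  finally show ?thesis by simp
qed

lemma cbil_E_right:
  assumes x: "x \<in> U"
  shows "cbil u (E j x) = - (phase x * cis (2 * \<theta> j x)) * cinner u (E j x)"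
proof -
  have "cbil (E j x) (E j x) * cnj (cbil (E j x) (E j x)) = 1"
    using phase_unit[OF x] by (simp add: cbil_E[OF x] cis_cnj cis_mult mult.commute mult.left_commute)
  then have "cconj (E j x) = (- cnj (phase x * cis (2 * \<theta> j x))) *s E j x"
    using cconj_eq_if_cbil_unit[of "E j x"] cinner_E[OF x, of j j] by (simp add: cbil_E[OF x])
  then have "cbil u (E j x) = cinner u ((- cnj (phase x * cis (2 * \<theta> j x))) *s E j x)"
    by (simp only: cinner_cconj_right[symmetric])
  then show ?thesis by (simp only: cinner_scale_right) simp
qed

lemma dE_eq: "x \<in> U \<Longrightarrow> dE j x w = dF x (de j x w) + d2F x w (e j x)"
  using has_derivative_unique[OF E_deriv has_derivative_dF_apply[OF _ e_deriv]] by metis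

lemma hcomp_eq_cubic_form: "x \<in> U \<Longrightarrow> hcomp dF e dE k i j x = cubic_form x (e i x) (e j x) (e k x)"
proof -
  assume x: "x \<in> U"
  have "gR (dF x (de j x (e i x))) (Jv (E k x)) = 0"
    using gR_commute F_lagrangian[OF x] by metis
  then show ?thesis by (simp add: hcomp_def cubic_form_def dE_eq[OF x] gR_add_left)
qed

lemma cinner_dE: "x \<in> U \<Longrightarrow> cinner (dE j x u) (E k x) + cinner (E j x) (dE k x u) = 0"
proof -
  assume x: "x \<in> U"
  have "((\<lambda>y. cinner (E j y) (E k y)) has_derivative
         (\<lambda>u. cinner (dE j x u) (E k x) + cinner (E j x) (dE k x u))) (at x)"
    by (rule has_derivative_cinner[OF E_deriv[OF x] E_deriv[OF x]])
  from has_derivative_const_on_open[OF open_U x cinner_E this] show ?thesis by simp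
qed

lemma cbil_dE_offdiag:
  assumes x: "x \<in> U" and "j \<noteq> k"
  shows "cbil (dE j x u) (E k x) + cbil (E j x) (dE k x u) = 0"
proof -
  have zero: "cbil (E j y) (E k y) = 0" if "y \<in> U" for y
    using cbil_E[OF that] \<open>j \<noteq> k\<close> by simp
  have "((\<lambda>y. cbil (E j y) (E k y)) has_derivative
         (\<lambda>u. cbil (dE j x u) (E k x) + cbil (E j x) (dE k x u))) (at x)"
    by (rule has_derivative_cbil[OF E_deriv[OF x] E_deriv[OF x]])
  from has_derivative_const_on_open[OF open_U x zero this] show ?thesis by simp
qed

lemma cbil_dE_diag:
  assumes x: "x \<in> U"
  shows "2 * cbil (dE j x u) (E j x)
    = - (cbil (d\<xi> x u) (F x) + \<i> * of_real (2 * d\<theta> j x u) * phase x) * cis (2 * \<theta> j x)"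
proof -
  have "((\<lambda>y. cbil (E j y) (E j y)) has_derivative
         (\<lambda>u. cbil (dE j x u) (E j x) + cbil (E j x) (dE j x u))) (at x)"
    by (rule has_derivative_cbil[OF E_deriv[OF x] E_deriv[OF x]])
  moreover have "((\<lambda>y. - (phase y * cis (2 * \<theta> j y))) has_derivative
      (\<lambda>u. - (phase x * ((2 * d\<theta> j x u) *\<^sub>R (\<i> * cis (2 * \<theta> j x)))
             + cbil (d\<xi> x u) (F x) * cis (2 * \<theta> j x)))) (at x)"
    by (intro has_derivative_minus has_derivative_mult has_derivative_phase[OF x] has_derivative_cis
        has_derivative_mult_right theta_deriv[OF x])
  ultimately have "(\<lambda>u. cbil (dE j x u) (E j x) + cbil (E j x) (dE j x u))
    = (\<lambda>u. - (phase x * ((2 * d\<theta> j x u) *\<^sub>R (\<i> * cis (2 * \<theta> j x)))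
             + cbil (d\<xi> x u) (F x) * cis (2 * \<theta> j x)))"
    using cbil_E by (intro has_derivative_unique_on_open[OF open_U x]) simp_all
  from fun_cong[OF this, of u] show ?thesis
    by (simp add: cbil_commute[of "E j x"] scaleR_conv_of_real algebra_simps)
qed

lemma hcomp_swap: "x \<in> U \<Longrightarrow> hcomp dF e dE j i j x = hcomp dF e dE i j j x"
proof -
  assume x: "x \<in> U"
  have "hcomp dF e dE j i j x = cubic_form x (e i x) (e j x) (e j x)"
    by (rule hcomp_eq_cubic_form[OF x])
  also have "\<dots> = cubic_form x (e j x) (e i x) (e j x)"
    by (rule cubic_form_swap12[OF x])
  also have "\<dots> = cubic_form x (e j x) (e j x) (e i x)"
    by (rule cubic_form_swap23[OF x])
  also have "\<dots> = hcomp dF e dE i j j x"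
    by (rule hcomp_eq_cubic_form[OF x, symmetric])
  finally show ?thesis .
qed

lemma angle_derivative:
  assumes x: "x \<in> U"
  shows "d\<theta> j x (e i x) = hcomp dF e dE i j j x - sform \<xi> d\<xi> x (e i x) / 2"
proof -
  define u where "u = e i x"
  define a where "a = cinner (dE j x u) (E j x)"
  define D where "D = cbil (d\<xi> x u) (F x)"
  have "cis (2 * \<theta> j x) * cnj (cis (2 * \<theta> j x)) = 1"
    by (simp add: cis_cnj cis_mult)
  moreover have "- 2 * (phase x * cis (2 * \<theta> j x)) * a
      = - (D + \<i> * of_real (2 * d\<theta> j x u) * phase x) * cis (2 * \<theta> j x)"
    using cbil_dE_diag[OF x, of j u] by (simp add: cbil_E_right[OF x] a_def D_def mult.assoc)
  ultimately have "2 * a = cnj (phase x) * D + \<i> * of_real (2 * d\<theta> j x u)"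
    using phase_unit[OF x] by algebra
  from arg_cong[where f = Im, OF this]
  have "2 * Im a = sform \<xi> d\<xi> x u + 2 * d\<theta> j x u"
    by (simp add: sform_eq[OF x] D_def)
  moreover have "Im a = hcomp dF e dE i j j x"
    using hcomp_swap[OF x] by (simp add: a_def u_def hcomp_def gR_Jv_right)
  ultimately show ?thesis unfolding u_def by simp
qed

lemma angle_connection:
  assumes x: "x \<in> U" and jk: "j \<noteq> k"
  shows "sin (\<theta> j x - \<theta> k x) * omega dF e dE j k i x = cos (\<theta> j x - \<theta> k x) * hcomp dF e dE k i j x"
proof -
  define u where "u = e i x"
  define a where "a = cinner (dE j x u) (E k x)"
  have "cnj (cinner (dE k x u) (E j x)) = - a"
    using cinner_dE[OF x, of j u k] by (simp add: a_def cinner_commute[of "E j x"] add_eq_0_iff)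
  then have b: "cinner (dE k x u) (E j x) = - cnj a"
    by (metis complex_cnj_cnj complex_cnj_minus)
  have "cbil (dE k x u) (E j x) + cbil (dE j x u) (E k x) = 0"
    using cbil_dE_offdiag[OF x, of k j u] jk by (simp add: cbil_commute)
  then have "- (phase x * cis (2 * \<theta> j x)) * - cnj a + - (phase x * cis (2 * \<theta> k x)) * a = 0"
    by (simp only: cbil_E_right[OF x] b a_def[symmetric])
  then have "cis (2 * \<theta> k x) * a = cis (2 * \<theta> j x) * cnj a"
    using phase_unit[OF x] by algebra
  then have "sin (\<theta> j x - \<theta> k x) * Re a = cos (\<theta> j x - \<theta> k x) * Im a"
    by (rule sin_Re_eq_cos_Im_if_cis_eq_cnj)
  then show ?thesis
    by (simp only: a_def u_def omega_def hcomp_def gR_Jv_right) (simp add: gR_def)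
qed

end

theorem proposition1:
  fixes U :: "(real^'m) set"
    and F :: "real^'m \<Rightarrow> complex^'c"
    and dF :: "real^'m \<Rightarrow> real^'m \<Rightarrow> complex^'c"
    and d2F :: "real^'m \<Rightarrow> real^'m \<Rightarrow> real^'m \<Rightarrow> complex^'c"
    and e :: "'m \<Rightarrow> real^'m \<Rightarrow> real^'m"
    and de :: "'m \<Rightarrow> real^'m \<Rightarrow> real^'m \<Rightarrow> real^'m"
    and dE :: "'m \<Rightarrow> real^'m \<Rightarrow> real^'m \<Rightarrow> complex^'c"
    and \<theta> :: "'m \<Rightarrow> real^'m \<Rightarrow> real"
    and d\<theta> :: "'m \<Rightarrow> real^'m \<Rightarrow> real^'m \<Rightarrow> real"
    and \<xi> :: "real^'m \<Rightarrow> complex^'c"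
    and d\<xi> :: "real^'m \<Rightarrow> real^'m \<Rightarrow> complex^'c"
  assumes dim: "CARD('c) = CARD('m) + 2"
    and U_open: "open U"
    and F_deriv: "\<forall>x\<in>U. (F has_derivative dF x) (at x)"
    and dF_deriv: "\<forall>x\<in>U. \<forall>v. ((\<lambda>y. dF y v) has_derivative (\<lambda>w. d2F x w v)) (at x)"
    and F_on_Q: "\<forall>x\<in>U. cinner (F x) (F x) = 1 \<and> cbil (F x) (F x) = 0"
    and F_horizontal: "\<forall>x\<in>U. \<forall>v. cinner (dF x v) (F x) = 0"
    and F_immersion: "\<forall>x\<in>U. inj (dF x)"
    and F_lagrangian: "\<forall>x\<in>U. \<forall>v w. gR (Jv (dF x v)) (dF x w) = 0"
    and xi_deriv: "\<forall>x\<in>U. (\<xi> has_derivative d\<xi> x) (at x)"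
    and xi_unit: "\<forall>x\<in>U. cinner (\<xi> x) (\<xi> x) = 1"
    and xi_normal: "\<forall>x\<in>U. cinner (\<xi> x) (F x) = 0 \<and> (\<forall>v. QT (F x) v \<longrightarrow> gR (\<xi> x) v = 0)"
    and e_deriv: "\<forall>j. \<forall>x\<in>U. (e j has_derivative de j x) (at x)"
    and E_deriv: "\<forall>j. \<forall>x\<in>U. ((\<lambda>y. dF y (e j y)) has_derivative dE j x) (at x)"
    and frame: "\<forall>x\<in>U. \<forall>j k. gR (dF x (e j x)) (dF x (e k x)) = (if j = k then 1 else 0)"
    and theta_deriv: "\<forall>j. \<forall>x\<in>U. (\<theta> j has_derivative d\<theta> j x) (at x)"
    and angles: "\<forall>x\<in>U. \<forall>j. shapeA F d\<xi> x (e j x) =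
        cos (2 * \<theta> j x) *\<^sub>R dF x (e j x) - sin (2 * \<theta> j x) *\<^sub>R Jv (dF x (e j x))"
  shows "\<forall>x\<in>U. \<forall>i j k.
           d\<theta> j x (e i x) = hcomp dF e dE i j j x - sform \<xi> d\<xi> x (e i x) / 2
         \<and> (j \<noteq> k \<longrightarrow> sin (\<theta> j x - \<theta> k x) * omega dF e dE j k i x
                       = cos (\<theta> j x - \<theta> k x) * hcomp dF e dE k i j x)"
proof -
  interpret lagrangian_angle_frame U F dF d2F \<xi> d\<xi> e de dE \<theta> d\<theta>
    by unfold_locales (use assms in auto)
  show ?thesis using angle_derivative angle_connection by blast
qed

end
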